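(* Let $m$ be a positive integer with $\omega(m)\ge 2$. Then the $n$-ary functions $\mathrm{AND}_n$ can be realized by probabilistic $\mathrm{CC}^2[m]$-circuits of size polynomial in $n$ using $O(\log n)$ random bits. In fact, for two different primes $p,q$, this realization can be done by $\mathrm{CC}[p;q]$-circuits.
   Context: For an integer $m\ge 1$ and $A\subseteq\{0,\dots,m-1\}$, a gate $\mathrm{MOD}_m^A$ takes finitely many Boolean inputs (counted with multiplicity) and outputs $1$ if their sum modulo $m$ lies in $A$, and $0$ otherwise. A $\mathrm{CC}^h[m]$-circuit is a depth-$h$ Boolean circuit all of whose gates are of the form $\mathrm{MOD}_m^A$ ($A$ may vary between gates), multiple wires allowed. A $\mathrm{CC}[p;q]$-circuit is a depth-2 circuit whose gates on the first level (fed by the inputs) are of the form $\mathrm{MOD}_p^A$ and whose output gate on the second level is of the form $\mathrm{MOD}_q^A$. The size of a circuit is its number of gates. $\omega(m)$ is the number of distinct prime divisors of $m$. A probabilistic circuit realizing an $n$-ary Boolean function $f$ with $r$ random bits is a circuit $\Gamma$ with $n+r$ inputs such that for every $\bar a\in\{0,1\}^n$, for at least $\frac23$ of the tuples $\bar b\in\{0,1\}^r$ we have $\Gamma(\bar a,\bar b)=f(\bar a)$. *)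

theory Defs
  imports Complex_Main "HOL-Computational_Algebra.Primes"
begin

definition omega :: "nat \<Rightarrow> nat" where
  "omega m = card (prime_factors m)"

(* A MOD gate reading a Boolean vector xs (inputs counted with multiplicity
   w i for the i-th coordinate): outputs 1 iff (sum of inputs) mod m lies in A. *)
definition mod_gate :: "nat \<Rightarrow> (nat \<Rightarrow> nat) \<Rightarrow> nat set \<Rightarrow> bool list \<Rightarrow> bool" where
  "mod_gate m w A xs = ((\<Sum>i<length xs. w i * (if xs ! i then 1 else 0)) mod m \<in> A)"

(* A depth-2 circuit: a list of first-level gates (wire multiplicities from the
   circuit inputs, accepting set) and an output gate given by wire multiplicities
   from the circuit inputs, wire multiplicities from the first-level gates, and
   an accepting set. *)
datatype circ2 = Circ2
  (level1: "((nat \<Rightarrow> nat) \<times> nat set) list")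
  (out_in: "nat \<Rightarrow> nat")
  (out_gates: "nat \<Rightarrow> nat")
  (out_acc: "nat set")

definition eval_circ2 :: "nat \<Rightarrow> nat \<Rightarrow> circ2 \<Rightarrow> bool list \<Rightarrow> bool" where
  "eval_circ2 p q C xs =
     (let g = map (\<lambda>(w, A). mod_gate p w A xs) (level1 C)
      in ((\<Sum>i<length xs. out_in C i * (if xs ! i then 1 else 0))
          + (\<Sum>j<length g. out_gates C j * (if g ! j then 1 else 0))) mod q \<in> out_acc C)"

definition size_circ2 :: "circ2 \<Rightarrow> nat" where
  "size_circ2 C = length (level1 C) + 1"

definition eval_CC2 :: "nat \<Rightarrow> circ2 \<Rightarrow> bool list \<Rightarrow> bool" where
  "eval_CC2 m C xs = eval_circ2 m m C xs"

(* CC[p;q]-circuit: first level MOD_p gates fed by inputs only, output MOD_q gate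
   fed by first-level gates only. *)
definition is_CCpq :: "nat \<Rightarrow> circ2 \<Rightarrow> bool" where
  "is_CCpq N C = (\<forall>i<N. out_in C i = 0)"

definition AND_fun :: "bool list \<Rightarrow> bool" where
  "AND_fun a = (\<forall>i<length a. a ! i)"

definition prob_realizes ::
  "(bool list \<Rightarrow> bool) \<Rightarrow> nat \<Rightarrow> nat \<Rightarrow> (bool list \<Rightarrow> bool) \<Rightarrow> bool" where
  "prob_realizes Gamma n r f =
     (\<forall>a. length a = n \<longrightarrow>
        3 * card {b. length b = r \<and> Gamma (a @ b) = f a} \<ge> 2 * 2 ^ r)"

end

theory Submission
  imports Defs "HOL-Library.FuncSet" "HOL-Number_Theory.Cong"
begin

(* Fix primes p \<noteq> q and r \<approx> log n random bits. If the input a has a zero, a uniformly random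
   v \<in> Z_p^n is orthogonal to the indicator vector of the zeros of a with probability at most 1/2.
   A union bound over the inputs and over sets of 2^r/3 seeds yields vectors v_\<rho>,l
   (\<rho> \<in> {0,1}^r, l < 6) such that for every input with a zero at most a third of the seeds \<rho> have
   all six inner products vanishing; for the all-ones input they vanish for every seed.

   The seed b is tested with MOD_p gates: for g \<in> Z_p^R exactly p^(R-1) vectors U \<in> Z_p^R satisfy
   U \<cdot> g \<equiv> 1 if g \<noteq> 0, and none do if g = 0. Taking one gate for every pair (\<rho>, U), where g lists
   the bits of b \<oplus> \<rho> and the inner products for v_\<rho>,l, the number of satisfied gates is
   P (2^r - 1), plus P if b fails, with P = p^(r+5). As q does not divide P, a single MOD_q gate
   decides whether b passes, and the circuit has 2^r p^(r+6) + 1 = O(n^(p+1)) gates.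
   Multiplying all weights and residues by m/p on the first level and by m/q at the output turns
   a CC[p;q]-circuit into a CC^2[m]-circuit. *)

section \<open>Linear congruences modulo a prime\<close>

lemma card_lists_length_Suc:
  assumes "finite A"
  shows "card {U \<in> lists A. length U = Suc R \<and> P U}
       = (\<Sum>u\<in>A. card {U \<in> lists A. length U = R \<and> P (u # U)})"
proof -
  let ?S = "\<lambda>u. {U \<in> lists A. length U = R \<and> P (u # U)}"
  have fin: "finite (?S u)" for u
    by (rule finite_subset[OF _ finite_lists_length_eq[OF assms, of R]]) auto
  have "{U \<in> lists A. length U = Suc R \<and> P U} = (\<Union>u\<in>A. (#) u ` ?S u)"
    by (auto simp: length_Suc_conv image_iff)
  also have "card \<dots> = (\<Sum>u\<in>A. card ((#) u ` ?S u))"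
    by (rule card_UN_disjoint) (use assms fin in auto)
  finally show ?thesis
    by (simp add: card_image)
qed

lemma bij_betw_affine_mod:
  fixes p g x :: nat
  assumes "prime p" and "g mod p \<noteq> 0"
  shows "bij_betw (\<lambda>u. (x + u * g) mod p) {..<p} {..<p}"
proof -
  have "coprime g p"
    using assms by (metis coprime_commute dvd_eq_mod_eq_0 prime_imp_coprime)
  have "inj_on (\<lambda>u. (x + u * g) mod p) {..<p}"
  proof (rule inj_onI)
    fix u v assume "u \<in> {..<p}" "v \<in> {..<p}" "(x + u * g) mod p = (x + v * g) mod p"
    then have "[u * g = v * g] (mod p)"
      by (simp add: cong_def[symmetric] cong_add_lcancel_nat)
    then have "[u = v] (mod p)"
      using \<open>coprime g p\<close> cong_mult_rcancel_nat by blast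
    then show "u = v"
      using \<open>u \<in> {..<p}\<close> \<open>v \<in> {..<p}\<close> by (simp add: cong_less_modulus_unique_nat)
  qed
  moreover have "(\<lambda>u. (x + u * g) mod p) ` {..<p} \<subseteq> {..<p}"
    using prime_gt_0_nat[OF assms(1)] by auto
  ultimately show ?thesis
    by (simp add: bij_betw_def endo_inj_surj)
qed

lemma card_affine_mod_eq:
  fixes p g x c :: nat
  assumes "prime p" and "g mod p \<noteq> 0" and "c < p"
  shows "card {u \<in> {..<p}. (x + u * g) mod p = c} = 1"
proof -
  have bij: "bij_betw (\<lambda>u. (x + u * g) mod p) {..<p} {..<p}"
    using assms(1,2) by (rule bij_betw_affine_mod)
  then have "c \<in> (\<lambda>u. (x + u * g) mod p) ` {..<p}"
    using assms(3) by (simp add: bij_betw_def)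
  then obtain u where u: "u < p" "(x + u * g) mod p = c"
    by auto
  have "{v \<in> {..<p}. (x + v * g) mod p = c} = {u}"
  proof (intro equalityI subsetI)
    fix v assume "v \<in> {v \<in> {..<p}. (x + v * g) mod p = c}"
    then show "v \<in> {u}"
      using u inj_onD[OF bij_betw_imp_inj_on[OF bij], of v u] by simp
  qed (use u in simp)
  then show ?thesis
    by simp
qed

lemma card_linear_congruence_Suc:
  fixes p c x :: nat and g :: "nat \<Rightarrow> nat"
  shows "card {U \<in> lists {..<p}. length U = Suc R \<and> (x + (\<Sum>j<Suc R. U ! j * g j)) mod p = c}
     = (\<Sum>u<p. card {U \<in> lists {..<p}. length U = R
                     \<and> (x + u * g 0 + (\<Sum>j<R. U ! j * g (Suc j))) mod p = c})"
proof -
  have shift: "x + (\<Sum>j<Suc R. (u # U) ! j * g j) = x + u * g 0 + (\<Sum>j<R. U ! j * g (Suc j))" for u U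
    by (simp add: sum.lessThan_Suc_shift add.assoc del: sum.lessThan_Suc)
  show ?thesis
    by (subst card_lists_length_Suc[OF finite_lessThan]) (simp only: shift)
qed

lemma card_linear_congruence_solutions:
  fixes p c x :: nat and g :: "nat \<Rightarrow> nat"
  assumes p: "prime p" and c: "c < p"
  shows "card {U \<in> lists {..<p}. length U = R \<and> (x + (\<Sum>j<R. U ! j * g j)) mod p = c}
       = (if \<exists>j<R. g j mod p \<noteq> 0 then p ^ (R - 1) else if x mod p = c then p ^ R else 0)"
proof (induction R arbitrary: g x)
  case 0
  have "{U \<in> lists {..<p}. length U = 0 \<and> (x + (\<Sum>j<0. U ! j * g j)) mod p = c}
      = (if x mod p = c then {[]} else {})"
    by auto
  then show ?case
    by simp
next
  case (Suc R)
  note IH = Suc.IH[where g = "\<lambda>j. g (Suc j)"]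
  consider (tail) "\<exists>j<R. g (Suc j) mod p \<noteq> 0"
    | (head) "\<not> (\<exists>j<R. g (Suc j) mod p \<noteq> 0)" "g 0 mod p \<noteq> 0"
    | (zero) "\<forall>j<Suc R. g j mod p = 0"
    by (metis less_Suc_eq_0_disj)
  then show ?case
  proof cases
    case tail
    then have "p * p ^ (R - 1) = p ^ R" and "\<exists>j<Suc R. g j mod p \<noteq> 0"
      by (cases R; auto)+
    then show ?thesis
      unfolding card_linear_congruence_Suc IH if_P[OF tail] by simp
  next
    case head
    have "\<exists>j<Suc R. g j mod p \<noteq> 0"
      using head(2) by blast
    have "(\<Sum>u<p. if (x + u * g 0) mod p = c then p ^ R else 0)
        = p ^ R * card {u \<in> {..<p}. (x + u * g 0) mod p = c}"
      by (simp add: sum.If_cases Int_def)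
    also have "\<dots> = p ^ R"
      using card_affine_mod_eq[OF p head(2) c] by simp
    finally show ?thesis
      unfolding card_linear_congruence_Suc IH if_not_P[OF head(1)]
        if_P[OF \<open>\<exists>j<Suc R. g j mod p \<noteq> 0\<close>] by simp
  next
    case zero
    then obtain k where "g 0 = p * k"
      by (meson dvdE mod_0_imp_dvd zero_less_Suc)
    then have "(x + u * g 0) mod p = x mod p" for u
      by (simp add: mult.left_commute)
    moreover have tail: "\<not> (\<exists>j<R. g (Suc j) mod p \<noteq> 0)" and all: "\<not> (\<exists>j<Suc R. g j mod p \<noteq> 0)"
      using zero by auto
    ultimately show ?thesis
      unfolding card_linear_congruence_Suc IH if_not_P[OF tail] if_not_P[OF all] by simp
  qed
qed

lemma card_le_half_if_inj_into_complement:
  assumes "finite V" and "W \<subseteq> V" and "inj_on f W" and "f ` W \<subseteq> V - W"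
  shows "2 * card W \<le> card V"
proof -
  have "card W \<le> card (V - W)"
    using card_inj_on_le[OF assms(3,4)] assms(1) by blast
  moreover have "card (V - W) = card V - card W" and "card W \<le> card V"
    using assms(1,2) by (simp_all add: card_Diff_subset card_mono finite_subset)
  ultimately show ?thesis
    by linarith
qed

lemma card_linear_form_zero_le_half:
  fixes p n i0 :: nat and z :: "nat \<Rightarrow> nat"
  assumes p: "p \<ge> 2" and i0: "i0 < n" "z i0 = 1"
  defines "V \<equiv> PiE {..<n} (\<lambda>_. {..<p})"
  shows "2 * card {v \<in> V. (\<Sum>i<n. v i * z i) mod p = 0} \<le> card V" (is "2 * card ?W \<le> _")
proof (rule card_le_half_if_inj_into_complement)
  define step where "step v = v(i0 := Suc (v i0) mod p)" for v :: "nat \<Rightarrow> nat"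
  have split: "(\<Sum>i<n. v i * z i) = v i0 + (\<Sum>i\<in>{..<n} - {i0}. v i * z i)" for v
    using i0 by (simp add: sum.remove)
  show "inj_on step ?W"
  proof (rule inj_onI)
    fix v w assume "v \<in> ?W" "w \<in> ?W" "step v = step w"
    then have "v i0 < p" "w i0 < p"
      using i0 by (auto simp: V_def)
    from \<open>step v = step w\<close> have "Suc (v i0) mod p = Suc (w i0) mod p"
      unfolding step_def by (metis fun_upd_same)
    then have "[v i0 + 1 = w i0 + 1] (mod p)"
      by (simp add: cong_def)
    then have "v i0 = w i0"
      using \<open>v i0 < p\<close> \<open>w i0 < p\<close> cong_less_modulus_unique_nat by (simp only: cong_add_rcancel_nat)
    then show "v = w"
      using \<open>step v = step w\<close> unfolding step_def by (metis fun_upd_triv fun_upd_upd)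
  qed
  show "step ` ?W \<subseteq> V - ?W"
  proof (rule image_subsetI)
    fix v assume v: "v \<in> ?W"
    have "(\<Sum>i\<in>{..<n} - {i0}. step v i * z i) = (\<Sum>i\<in>{..<n} - {i0}. v i * z i)"
      by (simp add: step_def)
    then have "(\<Sum>i<n. step v i * z i) mod p = Suc (\<Sum>i<n. v i * z i) mod p"
      unfolding split[of "step v"] split[of v] by (simp add: step_def mod_add_left_eq)
    also have "\<dots> = 1"
      using v p mod_Suc_eq[of "\<Sum>i<n. v i * z i" p] by simp
    finally show "step v \<in> V - ?W"
      using v i0 p by (auto simp: V_def step_def PiE_iff extensional_def)
  qed
qed (auto simp: V_def finite_PiE)

section \<open>The probabilistic method\<close>

lemma card_PiE_constrained_le:
  assumes "finite I" and "J \<subseteq> I" and "finite V" and "W \<subseteq> V" and "2 * card W \<le> card V"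
  shows "2 ^ card J * card (PiE I (\<lambda>j. if j \<in> J then W else V)) \<le> card (PiE I (\<lambda>_. V))"
proof -
  have "2 ^ card J * card (PiE I (\<lambda>j. if j \<in> J then W else V))
      = (\<Prod>j\<in>I. if j \<in> J then 2 * card W else card V)"
    using assms(1,2) by (simp add: card_PiE if_distrib[of card] prod.If_cases Int_absorb1)
  also have "\<dots> \<le> (\<Prod>j\<in>I. card V)"
    using assms(5) by (intro prod_mono) auto
  finally show ?thesis
    using assms(1) by (simp add: card_PiE)
qed

lemma exists_PiE_avoiding_constraints:
  fixes Cs :: "('v set \<times> 'i set) set"
  assumes "finite I" and "finite V" and "V \<noteq> {}" and "finite Cs"
    and Cs: "\<And>W J. (W, J) \<in> Cs \<Longrightarrow> J \<subseteq> I \<and> W \<subseteq> V \<and> 2 * card W \<le> card V \<and> card J = N"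
    and "card Cs < 2 ^ N"
  shows "\<exists>F \<in> PiE I (\<lambda>_. V). \<forall>(W, J) \<in> Cs. \<exists>j \<in> J. F j \<notin> W"
proof -
  define Bad where "Bad = (\<lambda>(W, J). PiE I (\<lambda>j. if j \<in> J then W else V))"
  have Bad: "Bad C \<subseteq> PiE I (\<lambda>_. V)" "2 ^ N * card (Bad C) \<le> card (PiE I (\<lambda>_. V))" if "C \<in> Cs" for C
  proof -
    obtain W J where C: "C = (W, J)"
      by fastforce
    then have "J \<subseteq> I" "W \<subseteq> V" "2 * card W \<le> card V" "card J = N"
      using that Cs by auto
    show "Bad C \<subseteq> PiE I (\<lambda>_. V)"
      unfolding C Bad_def prod.case by (rule PiE_mono) (use \<open>W \<subseteq> V\<close> in simp)
    show "2 ^ N * card (Bad C) \<le> card (PiE I (\<lambda>_. V))"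
      unfolding C Bad_def \<open>card J = N\<close>[symmetric] using \<open>J \<subseteq> I\<close> \<open>W \<subseteq> V\<close> \<open>2 * card W \<le> card V\<close>
      by (simp add: card_PiE_constrained_le[OF assms(1) _ assms(2)])
  qed
  have "2 ^ N * card (\<Union>C\<in>Cs. Bad C) \<le> 2 ^ N * (\<Sum>C\<in>Cs. card (Bad C))"
    using card_UN_le[OF assms(4)] by simp
  also have "\<dots> \<le> card Cs * card (PiE I (\<lambda>_. V))"
    using sum_bounded_above[of Cs "\<lambda>C. 2 ^ N * card (Bad C)", OF Bad(2)]
    by (simp add: sum_distrib_left)
  also have "\<dots> < 2 ^ N * card (PiE I (\<lambda>_. V))"
    using assms
    by (intro mult_strict_right_mono) (auto simp: card_gt_0_iff PiE_eq_empty_iff finite_PiE)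
  finally have "(\<Union>C\<in>Cs. Bad C) \<noteq> PiE I (\<lambda>_. V)"
    by auto
  moreover have "(\<Union>C\<in>Cs. Bad C) \<subseteq> PiE I (\<lambda>_. V)"
    using Bad(1) by blast
  ultimately obtain F where F: "F \<in> PiE I (\<lambda>_. V)" "F \<notin> (\<Union>C\<in>Cs. Bad C)"
    by blast
  have "\<exists>j \<in> J. F j \<notin> W" if "(W, J) \<in> Cs" for W J
  proof (rule ccontr)
    assume "\<not> (\<exists>j \<in> J. F j \<notin> W)"
    then have "F \<in> Bad (W, J)"
      using F(1) by (auto simp: Bad_def PiE_iff)
    then show False
      using F(2) that by blast
  qed
  then show ?thesis
    using F(1) by blast
qed

lemma exists_seeded_family_rarely_in:
  fixes V :: "'v set" and W :: "'a \<Rightarrow> 'v set" and S :: "'s set" and d :: nat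
  assumes "finite V" and "V \<noteq> {}" and "finite A" and "finite S"
    and W: "\<And>a. a \<in> A \<Longrightarrow> W a \<subseteq> V \<and> 2 * card (W a) \<le> card V"
    and few: "card A * 2 ^ card S < 2 ^ ((card S div 3 + 1) * d)"
  shows "\<exists>F. (\<forall>s\<in>S. \<forall>l<d. F (s, l) \<in> V) \<and> (\<forall>a\<in>A. 3 * card {s \<in> S. \<forall>l<d. F (s, l) \<in> W a} \<le> card S)"
proof -
  define k where "k = card S div 3 + 1"
  define Ts where "Ts = {T. T \<subseteq> S \<and> card T = k}"
  define Cs where "Cs = (\<lambda>(a, T). (W a, T \<times> {..<d})) ` (A \<times> Ts)"
  have "finite Ts" and "card Ts \<le> 2 ^ card S"
    using card_mono[of "Pow S" Ts] finite_subset[of Ts "Pow S"] assms(4)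
    by (auto simp: Ts_def card_Pow)
  have "card Cs \<le> card (A \<times> Ts)"
    unfolding Cs_def using assms(3) \<open>finite Ts\<close> by (intro card_image_le) simp
  also have "\<dots> \<le> card A * 2 ^ card S"
    using \<open>card Ts \<le> 2 ^ card S\<close> by (simp add: card_cartesian_product)
  finally have "card Cs < 2 ^ (k * d)"
    using few by (simp add: k_def)
  moreover have "J \<subseteq> S \<times> {..<d} \<and> W' \<subseteq> V \<and> 2 * card W' \<le> card V \<and> card J = k * d"
    if "(W', J) \<in> Cs" for W' J
    using that W by (auto simp: Cs_def Ts_def card_cartesian_product)
  ultimately obtain F where F: "F \<in> PiE (S \<times> {..<d}) (\<lambda>_. V)" "\<forall>(W', J) \<in> Cs. \<exists>j \<in> J. F j \<notin> W'"
    using exists_PiE_avoiding_constraints[of "S \<times> {..<d}" V Cs "k * d"] assms \<open>finite Ts\<close>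
    by (auto simp: Cs_def)
  have "3 * card {s \<in> S. \<forall>l<d. F (s, l) \<in> W a} \<le> card S" if "a \<in> A" for a
  proof (rule ccontr)
    assume "\<not> ?thesis"
    then have "k \<le> card {s \<in> S. \<forall>l<d. F (s, l) \<in> W a}"
      by (simp add: k_def)
    then obtain T where T: "T \<subseteq> {s \<in> S. \<forall>l<d. F (s, l) \<in> W a}" "card T = k"
      by (meson obtain_subset_with_card_n)
    then have "(W a, T \<times> {..<d}) \<in> Cs"
      using that by (auto simp: Cs_def Ts_def)
    then show False
      using F(2) T(1) by fastforce
  qed
  moreover have "\<forall>s\<in>S. \<forall>l<d. F (s, l) \<in> V"
    using F(1) by auto
  ultimately show ?thesis
    by blast
qed

section \<open>Testing a seed with MOD gates\<close>

lemma finite_bool_lists: "finite {xs :: bool list. length xs = n}"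
  using finite_lists_length_eq[of "UNIV :: bool set" n] by simp

lemma card_bool_lists: "card {xs :: bool list. length xs = n} = 2 ^ n"
  using card_lists_length_eq[of "UNIV :: bool set" n] by simp

lemma sum_lessThan_add:
  fixes f :: "nat \<Rightarrow> 'a :: comm_monoid_add"
  shows "(\<Sum>i<m + k. f i) = (\<Sum>i<m. f i) + (\<Sum>i<k. f (m + i))"
  by (induction k) (simp_all add: add.assoc)

(* As p - 1 \<equiv> -1, a bit x of weight f i True + (p - 1) * f i False contributes f i x - f i False;
   the offset \<Sum>i. f i False is moved into the accepting set. *)
definition affine_gate :: "nat \<Rightarrow> (nat \<Rightarrow> bool \<Rightarrow> nat) \<Rightarrow> nat \<Rightarrow> nat \<Rightarrow> (nat \<Rightarrow> nat) \<times> nat set" where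
  "affine_gate p f N c =
     ((\<lambda>i. f i True + (p - 1) * f i False), {s. (s + (\<Sum>i<N. f i False)) mod p = c})"

lemma mod_gate_affine_gate:
  assumes "p \<ge> 1" and "length xs = N"
  shows "case_prod (mod_gate p) (affine_gate p f N c) xs \<longleftrightarrow> (\<Sum>i<N. f i (xs ! i)) mod p = c"
proof -
  have "[(f i True + (p - 1) * f i False) * (if x then 1 else 0) + f i False = f i x] (mod p)"
    for i x
  proof (cases x)
    case True
    have "(f i True + (p - 1) * f i False) * 1 + f i False = f i True + f i False * p"
      using assms(1) by (cases p) auto
    then show ?thesis
      using True by (simp only: if_True cong_def mod_mult_self1)
  qed (simp add: cong_def)
  then have "[(\<Sum>i<N. (f i True + (p - 1) * f i False) * (if xs ! i then 1 else 0))
      + (\<Sum>i<N. f i False) = (\<Sum>i<N. f i (xs ! i))] (mod p)"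
    by (simp add: sum.distrib[symmetric] cong_sum)
  then show ?thesis
    using assms(2) by (simp add: affine_gate_def mod_gate_def cong_def mod_add_left_eq)
qed

definition dot_zeros :: "nat \<Rightarrow> (nat \<Rightarrow> nat) \<Rightarrow> bool list \<Rightarrow> nat" where
  "dot_zeros n v a = (\<Sum>i<n. v i * (if a ! i then 0 else 1))"

definition test_vector ::
  "nat \<Rightarrow> nat \<Rightarrow> (bool list \<Rightarrow> nat \<Rightarrow> nat \<Rightarrow> nat) \<Rightarrow> bool list \<Rightarrow> bool list \<Rightarrow> bool list \<Rightarrow> nat \<Rightarrow> nat"
where
  "test_vector n r v \<rho> a b j =
     (if j < r then (if b ! j = \<rho> ! j then 0 else 1) else dot_zeros n (v \<rho> (j - r)) a)"

(* Applied to a @ b: position i < n reads the input bit a ! i, position n + j the random bit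
   b ! j. *)
definition test_input_value ::
  "nat \<Rightarrow> nat \<Rightarrow> nat \<Rightarrow> (bool list \<Rightarrow> nat \<Rightarrow> nat \<Rightarrow> nat) \<Rightarrow> bool list \<Rightarrow> nat list \<Rightarrow> nat \<Rightarrow> bool \<Rightarrow> nat"
where
  "test_input_value n r d v \<rho> U i x =
     (if i < n then (if x then 0 else \<Sum>l<d. U ! (r + l) * v \<rho> l i)
      else U ! (i - n) * (if x = \<rho> ! (i - n) then 0 else 1))"

definition test_gate ::
  "nat \<Rightarrow> nat \<Rightarrow> nat \<Rightarrow> nat \<Rightarrow> (bool list \<Rightarrow> nat \<Rightarrow> nat \<Rightarrow> nat) \<Rightarrow> bool list \<Rightarrow> nat list
   \<Rightarrow> (nat \<Rightarrow> nat) \<times> nat set"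
where
  "test_gate p n r d v \<rho> U = affine_gate p (test_input_value n r d v \<rho> U) (n + r) 1"

lemma sum_test_input_value:
  assumes "length a = n" and "length b = r"
  shows "(\<Sum>i<n + r. test_input_value n r d v \<rho> U i ((a @ b) ! i))
       = (\<Sum>j<r + d. U ! j * test_vector n r v \<rho> a b j)"
proof -
  have "(\<Sum>i<n. if a ! i then 0 else \<Sum>l<d. U ! (r + l) * v \<rho> l i)
      = (\<Sum>i<n. \<Sum>l<d. if a ! i then 0 else U ! (r + l) * v \<rho> l i)"
    by (intro sum.cong) auto
  also have "\<dots> = (\<Sum>l<d. U ! (r + l) * dot_zeros n (v \<rho> l) a)"
    by (subst sum.swap) (auto simp: dot_zeros_def sum_distrib_left intro!: sum.cong)
  finally show ?thesis
    unfolding sum_lessThan_add[of _ n r] sum_lessThan_add[of _ r d]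
    using assms by (simp add: test_input_value_def nth_append test_vector_def)
qed

lemma mod_gate_test_gate:
  assumes "p \<ge> 1" and "length a = n" and "length b = r"
  shows "case_prod (mod_gate p) (test_gate p n r d v \<rho> U) (a @ b)
     \<longleftrightarrow> (\<Sum>j<r + d. U ! j * test_vector n r v \<rho> a b j) mod p = 1"
  using assms by (simp add: test_gate_def mod_gate_affine_gate sum_test_input_value)

lemma test_vector_zero_iff:
  assumes "p \<ge> 2" and "length b = r" and "length \<rho> = r"
  shows "(\<forall>j<r + d. test_vector n r v \<rho> a b j mod p = 0)
     \<longleftrightarrow> b = \<rho> \<and> (\<forall>l<d. dot_zeros n (v \<rho> l) a mod p = 0)"
proof
  assume zero: "\<forall>j<r + d. test_vector n r v \<rho> a b j mod p = 0"
  have "b ! j = \<rho> ! j" if "j < r" for j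
  proof -
    have "test_vector n r v \<rho> a b j mod p = 0"
      using zero that by simp
    then show ?thesis
      using that assms(1) by (simp add: test_vector_def split: if_splits)
  qed
  then have "b = \<rho>"
    using assms(2,3) by (simp add: list_eq_iff_nth_eq)
  moreover have "dot_zeros n (v \<rho> l) a mod p = 0" if "l < d" for l
  proof -
    have "test_vector n r v \<rho> a b (r + l) mod p = 0"
      using zero that by simp
    then show ?thesis
      by (simp add: test_vector_def)
  qed
  ultimately show "b = \<rho> \<and> (\<forall>l<d. dot_zeros n (v \<rho> l) a mod p = 0)"
    by blast
next
  assume "b = \<rho> \<and> (\<forall>l<d. dot_zeros n (v \<rho> l) a mod p = 0)"
  then show "\<forall>j<r + d. test_vector n r v \<rho> a b j mod p = 0"
    by (auto simp: test_vector_def)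
qed

lemma card_accepting_test_gates:
  assumes "prime p" and "length a = n" and "length b = r" and "length \<rho> = r"
  shows "card {U \<in> lists {..<p}. length U = r + d
                \<and> case_prod (mod_gate p) (test_gate p n r d v \<rho> U) (a @ b)}
       = (if b = \<rho> \<and> (\<forall>l<d. dot_zeros n (v \<rho> l) a mod p = 0) then 0 else p ^ (r + d - 1))"
proof -
  have p: "p \<ge> 2"
    using assms(1) by (rule prime_ge_2_nat)
  have gate: "case_prod (mod_gate p) (test_gate p n r d v \<rho> U) (a @ b)
      \<longleftrightarrow> (0 + (\<Sum>j<r + d. U ! j * test_vector n r v \<rho> a b j)) mod p = 1" for U
    using mod_gate_test_gate[of p a n b r d v \<rho> U] p assms(2,3) by simp
  have zero: "(\<exists>j<r + d. test_vector n r v \<rho> a b j mod p \<noteq> 0)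
      \<longleftrightarrow> \<not> (b = \<rho> \<and> (\<forall>l<d. dot_zeros n (v \<rho> l) a mod p = 0))"
    unfolding test_vector_zero_iff[OF p assms(3,4), symmetric] by auto
  have "1 < p" "0 mod p \<noteq> 1"
    using p by simp_all
  then show ?thesis
    unfolding gate card_linear_congruence_solutions[OF assms(1) \<open>1 < p\<close>] zero by simp
qed

definition satisfied_gates :: "nat \<Rightarrow> ((nat \<Rightarrow> nat) \<times> nat set) list \<Rightarrow> bool list \<Rightarrow> nat" where
  "satisfied_gates p gs xs = length (filter (\<lambda>g. case_prod (mod_gate p) g xs) gs)"

lemma eval_circ2_counting:
  "eval_circ2 p q (Circ2 gs (\<lambda>_. 0) (\<lambda>_. 1) A) xs
     \<longleftrightarrow> satisfied_gates p gs xs mod q \<in> A"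
proof -
  have "(\<Sum>j<length gs. if case_prod (mod_gate p) (gs ! j) xs then 1 else 0)
      = card {j. j < length gs \<and> case_prod (mod_gate p) (gs ! j) xs}"
    by (simp add: sum.If_cases lessThan_def Collect_conj_eq)
  then show ?thesis
    by (simp add: eval_circ2_def satisfied_gates_def length_filter_conv_card case_prod_beta)
qed

lemma length_filter_concat_map_distinct:
  assumes "distinct xs" and "\<And>x. x \<in> set xs \<Longrightarrow> distinct ys"
  shows "length (filter P (concat (map (\<lambda>x. map (f x) ys) xs)))
       = (\<Sum>x\<in>set xs. card {y \<in> set ys. P (f x y)})"
  using assms
  by (simp add: filter_concat length_concat comp_def filter_map distinct_length_filter
      sum_list_distinct_conv_sum_set Collect_conj_eq Int_commute)

(* The accepting residue is the number of satisfied gates when the seed b passes: each of the other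
   2^r - 1 seeds contributes p^(r+d-1) satisfied gates. *)
definition and_test_circuit ::
  "nat \<Rightarrow> nat \<Rightarrow> nat \<Rightarrow> nat \<Rightarrow> nat \<Rightarrow> (bool list \<Rightarrow> nat \<Rightarrow> nat \<Rightarrow> nat) \<Rightarrow> circ2"
where
  "and_test_circuit p q n r d v = Circ2
     (concat (map (\<lambda>\<rho>. map (test_gate p n r d v \<rho>) (List.n_lists (r + d) [0..<p]))
        (List.n_lists r [False, True])))
     (\<lambda>_. 0) (\<lambda>_. 1) {p ^ (r + d - 1) * (2 ^ r - 1) mod q}"

lemma size_and_test_circuit: "size_circ2 (and_test_circuit p q n r d v) = 2 ^ r * p ^ (r + d) + 1"
  by (simp add: size_circ2_def and_test_circuit_def length_concat comp_def length_n_lists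
      sum_list_triv numeral_2_eq_2)

lemma satisfied_gates_and_test_circuit:
  assumes p: "prime p" and a: "length a = n" and b: "length b = r"
  shows "satisfied_gates p (level1 (and_test_circuit p q n r d v)) (a @ b)
       = (if \<forall>l<d. dot_zeros n (v b l) a mod p = 0 then 0 else p ^ (r + d - 1))
         + p ^ (r + d - 1) * (2 ^ r - 1)"
proof -
  let ?P = "p ^ (r + d - 1)"
  define good where "good \<rho> \<longleftrightarrow> (\<forall>l<d. dot_zeros n (v \<rho> l) a mod p = 0)" for \<rho>
  define Seeds where "Seeds = {\<rho> :: bool list. length \<rho> = r}"
  have "finite Seeds" "b \<in> Seeds" "card Seeds = 2 ^ r"
    using b by (simp_all add: Seeds_def finite_bool_lists card_bool_lists)
  have "set (List.n_lists r [False, True]) = Seeds"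
    by (auto simp: Seeds_def set_n_lists)
  moreover have "{U \<in> set (List.n_lists (r + d) [0..<p]). Acc U}
      = {U \<in> lists {..<p}. length U = r + d \<and> Acc U}" for Acc
    by (auto simp: set_n_lists)
  ultimately have "satisfied_gates p (level1 (and_test_circuit p q n r d v)) (a @ b)
      = (\<Sum>\<rho>\<in>Seeds. if b = \<rho> \<and> good \<rho> then 0 else ?P)"
    using card_accepting_test_gates[OF p a b]
    by (simp add: and_test_circuit_def satisfied_gates_def length_filter_concat_map_distinct
        distinct_n_lists Seeds_def good_def)
  also have "\<dots> = (if good b then 0 else ?P) + (\<Sum>\<rho>\<in>Seeds - {b}. if b = \<rho> \<and> good \<rho> then 0 else ?P)"
    using \<open>finite Seeds\<close> \<open>b \<in> Seeds\<close> by (simp add: sum.remove)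
  also have "(\<Sum>\<rho>\<in>Seeds - {b}. if b = \<rho> \<and> good \<rho> then 0 else ?P) = (\<Sum>\<rho>\<in>Seeds - {b}. ?P)"
    by (rule sum.cong) auto
  also have "\<dots> = ?P * (2 ^ r - 1)"
    using \<open>finite Seeds\<close> \<open>b \<in> Seeds\<close> \<open>card Seeds = 2 ^ r\<close> by simp
  finally show ?thesis
    by (simp add: good_def)
qed

lemma eval_and_test_circuit:
  assumes p: "prime p" and q: "prime q" "p \<noteq> q" and a: "length a = n" and b: "length b = r"
  shows "eval_circ2 p q (and_test_circuit p q n r d v) (a @ b)
     \<longleftrightarrow> (\<forall>l<d. dot_zeros n (v b l) a mod p = 0)"
proof -
  let ?P = "p ^ (r + d - 1)"
  have "\<not> q dvd ?P"
  proof
    assume "q dvd ?P"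
    then have "q dvd p"
      by (rule prime_dvd_power[OF q(1)])
    then show False
      using p q primes_dvd_imp_eq by blast
  qed
  have "(?P + ?P * (2 ^ r - 1)) mod q \<noteq> ?P * (2 ^ r - 1) mod q"
  proof
    assume "(?P + ?P * (2 ^ r - 1)) mod q = ?P * (2 ^ r - 1) mod q"
    then have "[?P = 0] (mod q)"
      by (simp add: cong_def[symmetric] cong_add_rcancel_0_nat)
    with \<open>\<not> q dvd ?P\<close> show False
      by (simp add: cong_0_iff)
  qed
  moreover have "eval_circ2 p q (and_test_circuit p q n r d v) (a @ b)
      \<longleftrightarrow> satisfied_gates p (level1 (and_test_circuit p q n r d v)) (a @ b) mod q
          = ?P * (2 ^ r - 1) mod q"
    unfolding and_test_circuit_def eval_circ2_counting by simp
  ultimately show ?thesis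
    unfolding satisfied_gates_and_test_circuit[OF p a b] by auto
qed

section \<open>Probabilistic CC[p;q]-circuits for AND\<close>

lemma prob_realizes_one_sided:
  assumes yes: "\<And>a b. length a = n \<Longrightarrow> length b = r \<Longrightarrow> f a \<Longrightarrow> Gamma (a @ b)"
    and no: "\<And>a. length a = n \<Longrightarrow> \<not> f a \<Longrightarrow> 3 * card {b. length b = r \<and> Gamma (a @ b)} \<le> 2 ^ r"
  shows "prob_realizes Gamma n r f"
  unfolding prob_realizes_def
proof (intro allI impI)
  fix a :: "bool list" assume a: "length a = n"
  define B where "B = {b :: bool list. length b = r}"
  have "finite B" "card B = 2 ^ r"
    by (simp_all add: B_def finite_bool_lists card_bool_lists)
  show "2 * 2 ^ r \<le> 3 * card {b. length b = r \<and> Gamma (a @ b) = f a}"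
  proof (cases "f a")
    case True
    then have "{b. length b = r \<and> Gamma (a @ b) = f a} = B"
      using yes[OF a] by (auto simp: B_def)
    then show ?thesis
      using \<open>card B = 2 ^ r\<close> by simp
  next
    case False
    then have "{b. length b = r \<and> Gamma (a @ b) = f a} = B - {b. length b = r \<and> Gamma (a @ b)}"
      by (auto simp: B_def)
    moreover have "card (B - {b. length b = r \<and> Gamma (a @ b)})
        = 2 ^ r - card {b. length b = r \<and> Gamma (a @ b)}"
      using \<open>finite B\<close> \<open>card B = 2 ^ r\<close>
      by (subst card_Diff_subset) (auto simp: B_def intro: finite_subset)
    ultimately show ?thesis
      using no[OF a False] by simp
  qed
qed

lemma exists_exponent_log_bound:
  fixes n :: nat
  assumes "n \<ge> 2"
  obtains r where "n \<le> 2 ^ r" and "2 ^ r \<le> 2 * n" and "real r \<le> 2 / ln 2 * ln (real n)"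
proof -
  define r where "r = (LEAST r. n \<le> 2 ^ r)"
  have "n \<le> 2 ^ r"
    unfolding r_def by (rule LeastI[of _ n]) simp
  then have "r \<noteq> 0"
    using assms by (intro notI) simp
  have "\<not> n \<le> 2 ^ (r - 1)"
    unfolding r_def by (rule not_less_Least) (use \<open>r \<noteq> 0\<close> in \<open>simp add: r_def\<close>)
  moreover have "(2 :: nat) ^ r = 2 * 2 ^ (r - 1)"
    using \<open>r \<noteq> 0\<close> by (simp add: power_eq_if)
  ultimately have "2 ^ r \<le> 2 * n"
    by simp
  have "real (r - 1) * ln 2 < ln (real n)"
    using \<open>\<not> n \<le> 2 ^ (r - 1)\<close> by (simp add: ln_realpow[symmetric])
  moreover have "ln 2 \<le> ln (real n)"
    using assms by simp
  ultimately have "real r * ln 2 \<le> 2 * ln (real n)"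
    using \<open>r \<noteq> 0\<close> by (simp add: algebra_simps)
  then have "real r \<le> 2 / ln 2 * ln (real n)"
    by (simp add: field_simps)
  with \<open>n \<le> 2 ^ r\<close> \<open>2 ^ r \<le> 2 * n\<close> show ?thesis
    using that by blast
qed

lemma exists_zero_test_family:
  fixes p n r :: nat
  assumes "p \<ge> 2" and "n \<le> 2 ^ r"
  shows "\<exists>v :: bool list \<Rightarrow> nat \<Rightarrow> nat \<Rightarrow> nat. \<forall>a. length a = n \<and> \<not> AND_fun a \<longrightarrow>
           3 * card {\<rho>. length \<rho> = r \<and> (\<forall>l<6. dot_zeros n (v \<rho> l) a mod p = 0)} \<le> 2 ^ r"
proof -
  define V where "V = PiE {..<n} (\<lambda>_. {..<p})"
  define A where "A = {a :: bool list. length a = n \<and> \<not> AND_fun a}"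
  define W where "W a = {v \<in> V. dot_zeros n v a mod p = 0}" for a
  define S where "S = {\<rho> :: bool list. length \<rho> = r}"
  have "finite V" "V \<noteq> {}"
    using assms(1) by (auto simp: V_def finite_PiE PiE_eq_empty_iff lessThan_empty_iff)
  have "A \<subseteq> {a. length a = n}"
    by (auto simp: A_def)
  then have "finite A" "card A \<le> 2 ^ n"
    using finite_subset[OF _ finite_bool_lists] card_mono[OF finite_bool_lists]
    by (auto simp: card_bool_lists)
  have "finite S" "card S = 2 ^ r"
    by (simp_all add: S_def finite_bool_lists card_bool_lists)
  have "W a \<subseteq> V \<and> 2 * card (W a) \<le> card V" if a: "a \<in> A" for a
  proof -
    obtain i0 where "i0 < n" "\<not> a ! i0"
      using a unfolding A_def AND_fun_def by blast
    then show ?thesis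
      using card_linear_form_zero_le_half[OF assms(1), of i0 n "\<lambda>i. if a ! i then 0 else 1"]
      by (auto simp: W_def V_def dot_zeros_def)
  qed
  moreover have "card A * 2 ^ card S < 2 ^ ((card S div 3 + 1) * 6)"
  proof -
    have "card A * 2 ^ card S \<le> 2 ^ (n + 2 ^ r)"
      using \<open>card A \<le> 2 ^ n\<close> \<open>card S = 2 ^ r\<close> by (simp add: power_add)
    also have "\<dots> < 2 ^ ((2 ^ r div 3 + 1) * 6)"
      using assms(2) by (intro power_strict_increasing) presburger+
    finally show ?thesis
      using \<open>card S = 2 ^ r\<close> by simp
  qed
  ultimately obtain F :: "bool list \<times> nat \<Rightarrow> nat \<Rightarrow> nat" where F_V: "\<forall>\<rho>\<in>S. \<forall>l<6. F (\<rho>, l) \<in> V"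
    and F_W: "\<forall>a\<in>A. 3 * card {\<rho> \<in> S. \<forall>l<6. F (\<rho>, l) \<in> W a} \<le> card S"
    using exists_seeded_family_rarely_in[OF \<open>finite V\<close> \<open>V \<noteq> {}\<close> \<open>finite A\<close> \<open>finite S\<close>, of W 6]
    by blast
  have "{\<rho> \<in> S. \<forall>l<6. F (\<rho>, l) \<in> W a}
      = {\<rho>. length \<rho> = r \<and> (\<forall>l<6. dot_zeros n (F (\<rho>, l)) a mod p = 0)}" for a
    using F_V by (auto simp: S_def W_def)
  then show ?thesis
    using F_W \<open>card S = 2 ^ r\<close> by (intro exI[of _ "\<lambda>\<rho> l. F (\<rho>, l)"]) (simp add: A_def)
qed

lemma size_and_test_circuit_le:
  assumes "n \<ge> 1" and "2 ^ r \<le> 2 * n"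
  shows "size_circ2 (and_test_circuit p q n r d v) \<le> (2 ^ (p + 1) * p ^ d + 1) * n ^ (p + 1)"
proof -
  have "p ^ r \<le> (2 ^ p) ^ r"
    by (intro power_mono) (simp_all add: less_imp_le)
  then have "2 ^ r * p ^ (r + d) \<le> (2 ^ r) ^ (p + 1) * p ^ d"
    by (simp add: power_add power_mult[symmetric] mult.commute[of p r] mult.assoc)
  also have "\<dots> \<le> (2 * n) ^ (p + 1) * p ^ d"
    using assms(2) by (intro mult_right_mono power_mono) simp_all
  finally have "2 ^ r * p ^ (r + d) \<le> 2 ^ (p + 1) * p ^ d * n ^ (p + 1)"
    by (simp add: power_mult_distrib mult_ac)
  moreover have "1 \<le> n ^ (p + 1)"
    using assms(1) by simp
  ultimately show ?thesis
    unfolding size_and_test_circuit distrib_right mult_1_left by linarith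
qed

lemma AND_prob_CCpq_circuit:
  fixes p q n :: nat
  assumes p: "prime p" and q: "prime q" "p \<noteq> q" and n: "n \<ge> 2"
  shows "\<exists>r C. size_circ2 C \<le> (2 ^ (p + 1) * p ^ 6 + 1) * n ^ (p + 1)
      \<and> real r \<le> 2 / ln 2 * ln (real n)
      \<and> is_CCpq (n + r) C \<and> prob_realizes (eval_circ2 p q C) n r AND_fun"
proof -
  obtain r where r: "n \<le> 2 ^ r" "2 ^ r \<le> 2 * n" "real r \<le> 2 / ln 2 * ln (real n)"
    using exists_exponent_log_bound[OF n] .
  obtain v :: "bool list \<Rightarrow> nat \<Rightarrow> nat \<Rightarrow> nat" where v: "\<And>a. length a = n \<Longrightarrow> \<not> AND_fun a \<Longrightarrow>
      3 * card {\<rho>. length \<rho> = r \<and> (\<forall>l<6. dot_zeros n (v \<rho> l) a mod p = 0)} \<le> 2 ^ r"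
    using exists_zero_test_family[OF prime_ge_2_nat[OF p] r(1)] by blast
  define C where "C = and_test_circuit p q n r 6 v"
  have "prob_realizes (eval_circ2 p q C) n r AND_fun"
  proof (rule prob_realizes_one_sided)
    fix a b :: "bool list" assume "length a = n" "length b = r" "AND_fun a"
    then show "eval_circ2 p q C (a @ b)"
      using eval_and_test_circuit[OF p q] by (simp add: C_def AND_fun_def dot_zeros_def)
  next
    fix a :: "bool list" assume a: "length a = n" "\<not> AND_fun a"
    have "{b. length b = r \<and> eval_circ2 p q C (a @ b)}
        = {\<rho>. length \<rho> = r \<and> (\<forall>l<6. dot_zeros n (v \<rho> l) a mod p = 0)}"
      using eval_and_test_circuit[OF p q a(1)] by (auto simp: C_def)
    then show "3 * card {b. length b = r \<and> eval_circ2 p q C (a @ b)} \<le> 2 ^ r"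
      using v[OF a] by simp
  qed
  moreover have "is_CCpq (n + r) C"
    by (simp add: is_CCpq_def C_def and_test_circuit_def)
  moreover have "size_circ2 C \<le> (2 ^ (p + 1) * p ^ 6 + 1) * n ^ (p + 1)"
    using size_and_test_circuit_le[OF _ r(2)] n by (simp add: C_def)
  ultimately show ?thesis
    using r(3) by blast
qed

lemma AND_prob_CCpq_poly:
  fixes p q :: nat
  assumes "prime p" and "prime q" and "p \<noteq> q"
  shows "\<exists>c k :: real. \<forall>n::nat. n \<ge> 2 \<longrightarrow>
           (\<exists>r C. real (size_circ2 C) \<le> k * real n powr c \<and> real r \<le> k * ln (real n) \<and>
              is_CCpq (n + r) C \<and> prob_realizes (eval_circ2 p q C) n r AND_fun)"
proof -
  define K :: nat where "K = 2 ^ (p + 1) * p ^ 6 + 1"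
  define k :: real where "k = real K + 2 / ln 2"
  have "\<exists>r C. real (size_circ2 C) \<le> k * real n powr real (p + 1) \<and> real r \<le> k * ln (real n)
      \<and> is_CCpq (n + r) C \<and> prob_realizes (eval_circ2 p q C) n r AND_fun" if "n \<ge> 2" for n
  proof -
    obtain r C where C: "size_circ2 C \<le> K * n ^ (p + 1)" "real r \<le> 2 / ln 2 * ln (real n)"
      "is_CCpq (n + r) C" "prob_realizes (eval_circ2 p q C) n r AND_fun"
      using AND_prob_CCpq_circuit[OF assms \<open>n \<ge> 2\<close>] unfolding K_def by blast
    have "real n powr real (p + 1) = real n ^ (p + 1)"
      using \<open>n \<ge> 2\<close> by (intro powr_realpow) simp
    then have "real (size_circ2 C) \<le> real K * real n powr real (p + 1)"
      using C(1) by (metis of_nat_le_iff of_nat_mult of_nat_power)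
    also have "\<dots> \<le> k * real n powr real (p + 1)"
      by (intro mult_right_mono) (simp_all add: k_def)
    moreover have "2 / ln 2 * ln (real n) \<le> k * ln (real n)"
      using \<open>n \<ge> 2\<close> by (intro mult_right_mono) (simp_all add: k_def)
    ultimately show ?thesis
      using C(2-4) by force
  qed
  then show ?thesis
    by blast
qed

section \<open>Change of modulus\<close>

definition scale_circ :: "nat \<Rightarrow> nat \<Rightarrow> circ2 \<Rightarrow> circ2" where
  "scale_circ k1 k2 C = Circ2
     (map (\<lambda>(w, A). (\<lambda>i. k1 * w i, (\<lambda>s. k1 * s) ` A)) (level1 C))
     (\<lambda>i. k2 * out_in C i) (\<lambda>j. k2 * out_gates C j) ((\<lambda>s. k2 * s) ` out_acc C)"

lemma size_scale_circ [simp]: "size_circ2 (scale_circ k1 k2 C) = size_circ2 C"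
  by (simp add: size_circ2_def scale_circ_def)

lemma mod_gate_scale:
  assumes "k > 0"
  shows "mod_gate (k * p) (\<lambda>i. k * w i) ((\<lambda>s. k * s) ` A) xs = mod_gate p w A xs"
  using assms
  by (simp add: mod_gate_def sum_distrib_left[symmetric] mult.assoc mod_mult_mult1
      inj_image_mem_iff inj_on_def)

lemma eval_CC2_scale_circ:
  assumes "k1 > 0" and "k2 > 0" and "m = k1 * p" and "m = k2 * q"
  shows "eval_CC2 m (scale_circ k1 k2 C) xs = eval_circ2 p q C xs"
proof -
  have "map (\<lambda>(w, A). mod_gate m w A xs) (level1 (scale_circ k1 k2 C))
      = map (\<lambda>(w, A). mod_gate p w A xs) (level1 C)"
    using assms(1,3) mod_gate_scale by (auto simp: scale_circ_def)
  then show ?thesis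
    using assms(2,4)
    by (simp add: eval_CC2_def eval_circ2_def scale_circ_def Let_def sum_distrib_left[symmetric]
        mult.assoc distrib_left[symmetric] mod_mult_mult1 inj_image_mem_iff inj_on_def)
qed

lemma two_prime_divisors:
  assumes "omega m \<ge> 2"
  obtains p q where "prime p" "prime q" "p \<noteq> q" "p dvd m" "q dvd m"
proof -
  obtain T where "T \<subseteq> prime_factors m" "card T = 2"
    using assms unfolding omega_def by (meson obtain_subset_with_card_n)
  then obtain p q where "p \<noteq> q" "p \<in> prime_factors m" "q \<in> prime_factors m"
    by (auto simp: card_2_iff)
  then show ?thesis
    using that by (auto simp: in_prime_factors_iff)
qed

lemma AND_prob_CC2_poly:
  assumes "m \<ge> 1" and "omega m \<ge> 2"
  shows "\<exists>c k :: real. \<forall>n::nat. n \<ge> 2 \<longrightarrow>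
           (\<exists>r C. real (size_circ2 C) \<le> k * real n powr c \<and> real r \<le> k * ln (real n) \<and>
              prob_realizes (eval_CC2 m C) n r AND_fun)"
proof -
  obtain p q where pq: "prime p" "prime q" "p \<noteq> q" "p dvd m" "q dvd m"
    using two_prime_divisors[OF assms(2)] .
  obtain k1 k2 where k: "m = k1 * p" "m = k2 * q"
    using pq(4,5) by (metis dvd_def mult.commute)
  then have "k1 > 0" "k2 > 0"
    using assms(1) by (auto intro!: gr0I)
  with k have "eval_CC2 m (scale_circ k1 k2 C) = eval_circ2 p q C" for C
    by (intro ext eval_CC2_scale_circ)
  then show ?thesis
    using AND_prob_CCpq_poly[OF pq(1-3)] size_scale_circ by metis
qed

theorem theorem1p3:
  shows "(\<forall>m::nat. m \<ge> 1 \<and> omega m \<ge> 2 \<longrightarrow>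
           (\<exists>c k :: real. \<forall>n::nat. n \<ge> 2 \<longrightarrow>
              (\<exists>r C. real (size_circ2 C) \<le> k * real n powr c \<and> real r \<le> k * ln (real n) \<and>
                 prob_realizes (eval_CC2 m C) n r AND_fun)))
       \<and> (\<forall>p q::nat. prime p \<and> prime q \<and> p \<noteq> q \<longrightarrow>
           (\<exists>c k :: real. \<forall>n::nat. n \<ge> 2 \<longrightarrow>
              (\<exists>r C. real (size_circ2 C) \<le> k * real n powr c \<and> real r \<le> k * ln (real n) \<and>
                 is_CCpq (n + r) C \<and> prob_realizes (eval_circ2 p q C) n r AND_fun)))"
  using AND_prob_CC2_poly AND_prob_CCpq_poly by blast

end
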